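(* Let $G$ be a graph and $\{C_1,\dots,C_\ell\}$ a min-max clique covering of $G$ with simple intersection. If $S$ is a positive zero forcing set of $G$, then for all $i,j\in\{1,\dots,\ell\}$ the sets $(V(G)\setminus S)\cap C_{i,j}$ and $(V(G)\setminus S)\cap C_{i,i}$ each have size at most one.
   Context: A clique covering of a graph is a set of cliques such that every edge lies in at least one of them; $\operatorname{cc}(G)$ is its minimum size. A min-max clique covering is a clique covering of size $\operatorname{cc}(G)$ consisting of maximal cliques; it has simple intersection if no three distinct cliques of it share a vertex. $C_{i,j}=C_i\cap C_j$ for $i\ne j$ and $C_{i,i}=C_i\setminus\bigcup_{j\ne i}C_j$. Positive zero forcing: initially the vertices of $S$ are black and all others white; repeatedly, let $W_1,\dots,W_k$ be the vertex sets of components of $G$ minus the black vertices; a black vertex $u$ whose only white neighbour in the subgraph induced by $W_i\cup(\text{black vertices})$ is $w$ may turn $w$ black. $S$ is a positive zero forcing set if eventually all vertices become black. *)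

theory Defs
  imports Main
begin

definition graph :: "'a set \<Rightarrow> 'a set set \<Rightarrow> bool" where
  "graph V E \<longleftrightarrow> finite V \<and> (\<forall>e\<in>E. \<exists>u v. e = {u, v} \<and> u \<in> V \<and> v \<in> V \<and> u \<noteq> v)"

definition clique :: "'a set \<Rightarrow> 'a set set \<Rightarrow> 'a set \<Rightarrow> bool" where
  "clique V E C \<longleftrightarrow> C \<subseteq> V \<and> (\<forall>u\<in>C. \<forall>v\<in>C. u \<noteq> v \<longrightarrow> {u, v} \<in> E)"

definition maximal_clique :: "'a set \<Rightarrow> 'a set set \<Rightarrow> 'a set \<Rightarrow> bool" where
  "maximal_clique V E C \<longleftrightarrow> clique V E C \<and> (\<forall>D. clique V E D \<and> C \<subseteq> D \<longrightarrow> D = C)"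

definition clique_covering :: "'a set \<Rightarrow> 'a set set \<Rightarrow> 'a set set \<Rightarrow> bool" where
  "clique_covering V E \<C> \<longleftrightarrow> (\<forall>C\<in>\<C>. clique V E C) \<and> (\<forall>e\<in>E. \<exists>C\<in>\<C>. e \<subseteq> C)"

definition cc :: "'a set \<Rightarrow> 'a set set \<Rightarrow> nat" where
  "cc V E = (LEAST n. \<exists>\<C>. clique_covering V E \<C> \<and> finite \<C> \<and> card \<C> = n)"

definition min_max_clique_covering :: "'a set \<Rightarrow> 'a set set \<Rightarrow> 'a set set \<Rightarrow> bool" where
  "min_max_clique_covering V E \<C> \<longleftrightarrow>
     clique_covering V E \<C> \<and> finite \<C> \<and> card \<C> = cc V E \<and> (\<forall>C\<in>\<C>. maximal_clique V E C)"

definition simple_intersection :: "'a set set \<Rightarrow> bool" where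
  "simple_intersection \<C> \<longleftrightarrow>
     (\<forall>A\<in>\<C>. \<forall>B\<in>\<C>. \<forall>C\<in>\<C>. A \<noteq> B \<and> A \<noteq> C \<and> B \<noteq> C \<longrightarrow> A \<inter> B \<inter> C = {})"

text \<open>C_{i,j} = C_i \<inter> C_j (i \<noteq> j) and C_{i,i} = C_i minus the union of the others.\<close>
definition private_part :: "'a set set \<Rightarrow> 'a set \<Rightarrow> 'a set" where
  "private_part \<C> C = C - \<Union>(\<C> - {C})"

definition adj_in :: "'a set set \<Rightarrow> 'a set \<Rightarrow> 'a \<Rightarrow> 'a \<Rightarrow> bool" where
  "adj_in E X u v \<longleftrightarrow> u \<in> X \<and> v \<in> X \<and> {u, v} \<in> E"

definition component_of :: "'a set set \<Rightarrow> 'a set \<Rightarrow> 'a set \<Rightarrow> bool" where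
  "component_of E X W \<longleftrightarrow> (\<exists>x\<in>X. W = {y. (adj_in E X)\<^sup>*\<^sup>* x y})"

text \<open>Black sets reachable from S by positive zero forcing steps: for a component W
 of G minus the black vertices B, a black vertex u whose only white neighbour in
 G[W \<union> B] is w forces w.\<close>
inductive_set pzf_reach :: "'a set \<Rightarrow> 'a set set \<Rightarrow> 'a set \<Rightarrow> 'a set set"
  for V :: "'a set" and E :: "'a set set" and S :: "'a set" where
  start: "S \<in> pzf_reach V E S"
| force: "\<lbrakk>B \<in> pzf_reach V E S; component_of E (V - B) W; u \<in> B;
            {v \<in> W \<union> B. {u, v} \<in> E \<and> v \<notin> B} = {w}\<rbrakk>
          \<Longrightarrow> insert w B \<in> pzf_reach V E S"

definition positive_zero_forcing_set :: "'a set \<Rightarrow> 'a set set \<Rightarrow> 'a set \<Rightarrow> bool" where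
  "positive_zero_forcing_set V E S \<longleftrightarrow> S \<subseteq> V \<and> V \<in> pzf_reach V E S"

end

theory Submission
  imports Defs
begin

text \<open>Two adjacent vertices x, y with the same closed neighbourhood can never be
 forced while both are white: a vertex u forcing x sees x in some white component W,
 then y lies in W as well, and u is adjacent to y, so x is not u's only white neighbour.
 Hence a positive zero forcing set contains one of any two closed twins. In a clique
 covering with simple intersection, every clique meeting C_i \<inter> C_j (i \<noteq> j) or C_{i,i}
 contains the whole set, so any two of its vertices are closed twins.\<close>

definition closed_twins :: "'a set set \<Rightarrow> 'a \<Rightarrow> 'a \<Rightarrow> bool" where
  "closed_twins E x y \<longleftrightarrow> x \<noteq> y \<and> {x, y} \<in> E \<and>
     (\<forall>u. u \<noteq> x \<and> u \<noteq> y \<longrightarrow> ({u, x} \<in> E \<longleftrightarrow> {u, y} \<in> E))"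

lemma closed_twins_sym: "closed_twins E x y \<Longrightarrow> closed_twins E y x"
  unfolding closed_twins_def by (auto simp: insert_commute)

lemma closed_twin_not_forced:
  assumes "component_of E (V - B) W" "u \<in> B"
    and forces: "{v \<in> W \<union> B. {u, v} \<in> E \<and> v \<notin> B} = {w}"
    and twins: "closed_twins E a b" and "a \<in> V - B" "b \<in> V - B"
  shows "w \<noteq> a"
proof
  assume "w = a"
  then have "a \<in> W" and ua: "{u, a} \<in> E" using forces by auto
  obtain x0 where W: "W = {y. (adj_in E (V - B))\<^sup>*\<^sup>* x0 y}"
    using assms(1) unfolding component_of_def by blast
  have "adj_in E (V - B) a b" using twins assms(5,6) unfolding adj_in_def closed_twins_def by auto
  with \<open>a \<in> W\<close> have "b \<in> W" unfolding W by (auto intro: rtranclp.rtrancl_into_rtrancl)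
  moreover have "{u, b} \<in> E" using ua twins assms(2,5,6) unfolding closed_twins_def by auto
  ultimately have "b = w" using forces assms(6) by blast
  with \<open>w = a\<close> twins show False unfolding closed_twins_def by simp
qed

lemma closed_twins_stay_white:
  assumes "B \<in> pzf_reach V E S" "closed_twins E x y" "x \<in> V - S" "y \<in> V - S"
  shows "x \<notin> B \<and> y \<notin> B"
  using assms(1)
proof induction
  case start
  then show ?case using assms by auto
next
  case (force B W u w)
  have "w \<noteq> x"
    using closed_twin_not_forced[OF force(2,3,4) assms(2)] assms(3,4) force.IH by blast
  moreover have "w \<noteq> y"
    using closed_twin_not_forced[OF force(2,3,4) closed_twins_sym[OF assms(2)]] assms(3,4) force.IH
    by blast
  ultimately show ?case using force.IH by auto
qed

lemma positive_zero_forcing_set_closed_twins: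
  assumes "positive_zero_forcing_set V E S" "closed_twins E x y" "x \<in> V" "y \<in> V"
  shows "x \<in> S \<or> y \<in> S"
  using closed_twins_stay_white[of V V E S x y] assms
  unfolding positive_zero_forcing_set_def by blast

lemma positive_zero_forcing_set_card_white_le_1:
  assumes "positive_zero_forcing_set V E S"
    and "\<And>x y. x \<in> X \<Longrightarrow> y \<in> X \<Longrightarrow> x \<noteq> y \<Longrightarrow> closed_twins E x y"
  shows "card ((V - S) \<inter> X) \<le> 1"
proof (cases "finite ((V - S) \<inter> X)")
  case True
  have "x = y" if "x \<in> (V - S) \<inter> X" "y \<in> (V - S) \<inter> X" for x y
    using positive_zero_forcing_set_closed_twins[OF assms(1) assms(2)] that by blast
  with True show ?thesis by (metis One_nat_def card_le_Suc0_iff_eq)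
qed simp

lemma clique_covering_closed_twins:
  assumes "clique_covering V E \<C>" "C \<in> \<C>" "X \<subseteq> C"
    and "\<And>D. D \<in> \<C> \<Longrightarrow> D \<inter> X \<noteq> {} \<Longrightarrow> X \<subseteq> D"
    and "x \<in> X" "y \<in> X" "x \<noteq> y"
  shows "closed_twins E x y"
proof -
  have clique: "\<And>D a b. D \<in> \<C> \<Longrightarrow> a \<in> D \<Longrightarrow> b \<in> D \<Longrightarrow> a \<noteq> b \<Longrightarrow> {a, b} \<in> E"
    using assms(1) unfolding clique_covering_def clique_def by blast
  have shift: "{u, b} \<in> E" if "{u, a} \<in> E" "a \<in> X" "b \<in> X" "u \<noteq> b" for u a b
  proof -
    obtain D where "D \<in> \<C>" "{u, a} \<subseteq> D"
      using assms(1) \<open>{u, a} \<in> E\<close> unfolding clique_covering_def by blast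
    with assms(4) that show ?thesis using clique[of D u b] by blast
  qed
  have "{x, y} \<in> E" using clique[OF assms(2)] assms(3,5-7) by blast
  moreover have "{u, x} \<in> E \<longleftrightarrow> {u, y} \<in> E" if "u \<noteq> x" "u \<noteq> y" for u
    using shift[of u x y] shift[of u y x] assms(5,6) that by blast
  ultimately show ?thesis unfolding closed_twins_def using assms(7) by blast
qed

lemma simple_intersection_covering_cliques:
  assumes "simple_intersection \<C>" "A \<in> \<C>" "B \<in> \<C>" "A \<noteq> B" "D \<in> \<C>" "D \<inter> (A \<inter> B) \<noteq> {}"
  shows "A \<inter> B \<subseteq> D"
  using assms unfolding simple_intersection_def by blast

lemma private_part_covering_cliques:
  assumes "A \<in> \<C>" "D \<in> \<C>" "D \<inter> private_part \<C> A \<noteq> {}"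
  shows "private_part \<C> A \<subseteq> D"
  using assms unfolding private_part_def by blast

theorem mainTheorem13:
  fixes V :: "'a set" and E :: "'a set set" and \<C> :: "'a set set" and S :: "'a set"
  assumes "graph V E"
    and "min_max_clique_covering V E \<C>"
    and "simple_intersection \<C>"
    and "positive_zero_forcing_set V E S"
  shows "(\<forall>A\<in>\<C>. \<forall>B\<in>\<C>. A \<noteq> B \<longrightarrow> card ((V - S) \<inter> (A \<inter> B)) \<le> 1)
       \<and> (\<forall>A\<in>\<C>. card ((V - S) \<inter> private_part \<C> A) \<le> 1)"
proof -
  have cover: "clique_covering V E \<C>"
    using assms(2) unfolding min_max_clique_covering_def by blast
  have "card ((V - S) \<inter> (A \<inter> B)) \<le> 1" if "A \<in> \<C>" "B \<in> \<C>" "A \<noteq> B" for A B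
  proof (rule positive_zero_forcing_set_card_white_le_1[OF assms(4)])
    show "closed_twins E x y" if "x \<in> A \<inter> B" "y \<in> A \<inter> B" "x \<noteq> y" for x y
      using clique_covering_closed_twins[OF cover \<open>A \<in> \<C>\<close> _ _ that]
        simple_intersection_covering_cliques[OF assms(3) \<open>A \<in> \<C>\<close> \<open>B \<in> \<C>\<close> \<open>A \<noteq> B\<close>]
      by blast
  qed
  moreover have "card ((V - S) \<inter> private_part \<C> A) \<le> 1" if "A \<in> \<C>" for A
  proof (rule positive_zero_forcing_set_card_white_le_1[OF assms(4)])
    show "closed_twins E x y" if "x \<in> private_part \<C> A" "y \<in> private_part \<C> A" "x \<noteq> y" for x y
      using clique_covering_closed_twins[OF cover \<open>A \<in> \<C>\<close> _ _ that]
        private_part_covering_cliques[OF \<open>A \<in> \<C>\<close>]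
      unfolding private_part_def by blast
  qed
  ultimately show ?thesis by blast
qed

end
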